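(* Let $\gamma\in\mathrm{SL}_2(\mathbb{Z})$ and $k\ge1$ with $\det(\mathrm{Id}_2-\gamma^k)\neq0$. Then \[ c_k(\gamma)=\frac1k\sum_{d\mid k}\phi\!\left(\frac kd\right)\bigl|\operatorname{tr}(\gamma^d)-2\bigr|, \] where $\phi$ is Euler's totient function.
   Context: Identify $\mathbb{Z}^{\oplus k}\otimes\mathbb{Z}^{\oplus2}\cong\mathbb{Z}^{2k}$ with coordinates $(j_1,\ell_1,\dots,j_k,\ell_k)$; for $w\in S_k$, $w\otimes\gamma$ acts by permuting the pairs according to $w$ and applying $\gamma$ to each pair. $c_k(\gamma)$ denotes the number of orbits of the cyclic group $\langle(1\,2\cdots k)\rangle\subset S_k$ (acting through its action on $\mathbb{Z}^{2k}$) on the finite set $\operatorname{coker}(\mathrm{Id}_{2k}-(1\,2\cdots k)\otimes\gamma)_{\mathrm{tors}}$. *)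

theory Defs
  imports "HOL-Analysis.Analysis" "HOL-Number_Theory.Totient"
begin

fun mpow :: "'a::semiring_1^'n^'n \<Rightarrow> nat \<Rightarrow> 'a^'n^'n" where
  "mpow A 0 = mat 1"
| "mpow A (Suc n) = A ** mpow A n"

(* Z^k (x) Z^2 = Z^{2k}: vectors v with v i \<in> Z^2 the i-th pair (j_i, l_i), i < k
   (0-indexed), and v i = 0 for i \<ge> k. *)
definition Zvec :: "nat \<Rightarrow> (nat \<Rightarrow> int^2) set" where
  "Zvec k = {v. \<forall>i\<ge>k. v i = 0}"

(* (w (x) g) for w = the k-cycle (0 1 ... k-1), i.e. i \<mapsto> (i+1) mod k:
   the pair in slot i is moved to slot w i and g is applied to it. *)
definition cyc_tensor :: "nat \<Rightarrow> int^2^2 \<Rightarrow> (nat \<Rightarrow> int^2) \<Rightarrow> (nat \<Rightarrow> int^2)" where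
  "cyc_tensor k g v = (\<lambda>j. if j < k then g *v v ((j + k - 1) mod k) else 0)"

definition Mmap :: "nat \<Rightarrow> int^2^2 \<Rightarrow> (nat \<Rightarrow> int^2) \<Rightarrow> (nat \<Rightarrow> int^2)" where
  "Mmap k g v = v - cyc_tensor k g v"

definition Img :: "nat \<Rightarrow> int^2^2 \<Rightarrow> (nat \<Rightarrow> int^2) set" where
  "Img k g = Mmap k g ` Zvec k"

(* congruence modulo the image: cosets are the elements of the cokernel *)
definition coker_rel :: "nat \<Rightarrow> int^2^2 \<Rightarrow> ((nat \<Rightarrow> int^2) \<times> (nat \<Rightarrow> int^2)) set" where
  "coker_rel k g = {(u, v). u \<in> Zvec k \<and> v \<in> Zvec k \<and> u - v \<in> Img k g}"

(* the torsion subgroup of the cokernel, as a set of cosets *)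
definition coker_tors :: "nat \<Rightarrow> int^2^2 \<Rightarrow> (nat \<Rightarrow> int^2) set set" where
  "coker_tors k g =
     {v \<in> Zvec k. \<exists>n::nat. n > 0 \<and> (\<lambda>i. of_nat n *s v i) \<in> Img k g} // coker_rel k g"

definition cyc_perm :: "nat \<Rightarrow> (nat \<Rightarrow> int^2) \<Rightarrow> (nat \<Rightarrow> int^2)" where
  "cyc_perm k = cyc_tensor k (mat 1)"

definition cyc_orbit :: "nat \<Rightarrow> (nat \<Rightarrow> int^2) set \<Rightarrow> (nat \<Rightarrow> int^2) set set" where
  "cyc_orbit k C = {(cyc_perm k ^^ m) ` C | m. True}"

definition c_k :: "nat \<Rightarrow> int^2^2 \<Rightarrow> nat" where
  "c_k k g = card (cyc_orbit k ` coker_tors k g)"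

end

theory Submission
  imports Defs "HOL-Library.Function_Algebras" "HOL-Algebra.Group_Action"
    "HOL-Algebra.Elementary_Groups"
begin

(* The map u \<mapsto> \<Sum>_{j<k} \<gamma>^(k-j) u_j identifies the cokernel of Id - (1 2 ... k) \<otimes> \<gamma> with
   Z^2 / (Id - \<gamma>^k) Z^2, a group of order |det (Id - \<gamma>^k)|, so the whole cokernel is torsion.
   Under this identification the k-cycle acts as \<gamma>^(k-1), the inverse of \<gamma> modulo the lattice.
   By Burnside's lemma, k c_k(\<gamma>) is the sum over m < k of the number of classes fixed by
   \<gamma>^((k-1) m).  Their representatives form the lattice {x. \<gamma>^d x \<equiv> x} with d = gcd m k, which
   equals (1 + \<gamma>^d + ... + \<gamma>^(k-d)) Z^2 and so contains (Id - \<gamma>^k) Z^2 with index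
   |det (Id - \<gamma>^d)| = |tr \<gamma>^d - 2|.  Grouping the m by gcd m k gives the totient weights. *)

section \<open>Integer lattices in the plane\<close>

lemma matrix_vector_mult_2:
  fixes A :: "'a::comm_ring_1^2^2"
  shows "(A *v x) $ 1 = A$1$1 * x$1 + A$1$2 * x$2"
    and "(A *v x) $ 2 = A$2$1 * x$1 + A$2$2 * x$2"
  by (simp_all add: matrix_vector_mult_def sum_2)

lemma vec2_eq_iff: "(x::'a^2) = y \<longleftrightarrow> x$1 = y$1 \<and> x$2 = y$2"
  by (simp add: vec_eq_iff forall_2)

definition adjugate2 :: "'a::comm_ring_1^2^2 \<Rightarrow> 'a^2^2" where
  "adjugate2 A = vector [vector [A$2$2, - A$1$2], vector [- A$2$1, A$1$1]]"

lemma matrix_vector_mult_adjugate2: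
  fixes A :: "'a::comm_ring_1^2^2"
  shows "A *v (adjugate2 A *v x) = det A *s x"
    and "adjugate2 A *v (A *v x) = det A *s x"
  by (simp_all add: vec2_eq_iff matrix_vector_mult_2 adjugate2_def det_2 algebra_simps)

lemma inj_matrix_vector_mult_int2:
  fixes A :: "int^2^2"
  assumes "det A \<noteq> 0"
  shows "inj ((*v) A)"
proof (rule injI)
  fix x y assume "A *v x = A *v y"
  then have "det A *s x = det A *s y" by (metis matrix_vector_mult_adjugate2(2))
  then show "x = y" using assms by (simp add: vec2_eq_iff)
qed

definition mat_lattice :: "'a::comm_ring_1^'n^'m \<Rightarrow> ('a^'m) set" where
  "mat_lattice B = range ((*v) B)"

lemma mat_latticeI [intro, simp]: "B *v z \<in> mat_lattice B"
  by (simp add: mat_lattice_def)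

lemma mat_lattice_zero [simp]: "0 \<in> mat_lattice B"
  using mat_latticeI[of B 0] by simp

lemma mat_lattice_add: "a \<in> mat_lattice B \<Longrightarrow> b \<in> mat_lattice B \<Longrightarrow> a + b \<in> mat_lattice B"
  by (auto simp: mat_lattice_def simp flip: matrix_vector_right_distrib)

lemma mat_lattice_diff: "a \<in> mat_lattice B \<Longrightarrow> b \<in> mat_lattice B \<Longrightarrow> a - b \<in> mat_lattice B"
  by (auto simp: mat_lattice_def simp flip: matrix_vector_mult_diff_distrib)

lemma mat_lattice_uminus: "a \<in> mat_lattice B \<Longrightarrow> - a \<in> mat_lattice B"
  using mat_lattice_diff[of 0 B a] by simp

lemma mat_lattice_diff_iff: "b \<in> mat_lattice B \<Longrightarrow> a - b \<in> mat_lattice B \<longleftrightarrow> a \<in> mat_lattice B"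
  using mat_lattice_add[of "a - b" B b] mat_lattice_diff[of a B b] by auto

lemma mat_lattice_commute:
  assumes "A ** B = B ** A" and "z \<in> mat_lattice B"
  shows "A *v z \<in> mat_lattice B"
proof -
  obtain w where "z = B *v w" using assms(2) by (auto simp: mat_lattice_def)
  then have "A *v z = B *v (A *v w)" using assms(1) by (simp add: matrix_vector_mul_assoc)
  then show ?thesis by simp
qed

lemma mult_mem_mat_lattice_mult_iff:
  assumes "inj ((*v) S)"
  shows "S *v z \<in> mat_lattice (S ** D) \<longleftrightarrow> z \<in> mat_lattice D"
  using injD[OF assms] by (auto simp: mat_lattice_def simp flip: matrix_vector_mul_assoc)

lemma abs_det_smult_mem_mat_lattice:
  fixes B :: "'a::{comm_ring_1, abs_if}^2^2"
  shows "\<bar>det B\<bar> *s x \<in> mat_lattice B"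
proof -
  have "det B *s x \<in> mat_lattice B"
    by (metis mat_latticeI matrix_vector_mult_adjugate2(1))
  moreover have "- det B *s x = - (det B *s x)" by (simp add: vec_eq_iff)
  ultimately show ?thesis
    using mat_lattice_uminus[of "det B *s x" B] by (simp add: abs_if)
qed

definition lattice_coset :: "'a::comm_ring_1^'n^'m \<Rightarrow> 'a^'m \<Rightarrow> ('a^'m) set" where
  "lattice_coset B x = {y. x - y \<in> mat_lattice B}"

lemma lattice_coset_eq_iff:
  "lattice_coset B x = lattice_coset B y \<longleftrightarrow> x - y \<in> mat_lattice B"
proof
  assume eq: "lattice_coset B x = lattice_coset B y"
  have "y \<in> lattice_coset B y" by (simp add: lattice_coset_def)
  then have "y \<in> lattice_coset B x" by (simp only: eq)
  then show "x - y \<in> mat_lattice B" by (simp add: lattice_coset_def)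
next
  assume "x - y \<in> mat_lattice B"
  then show "lattice_coset B x = lattice_coset B y"
    using mat_lattice_add[of "x - y" B] mat_lattice_diff[of _ B "x - y"]
    by (fastforce simp: lattice_coset_def)
qed

text \<open>The gcd \<open>g\<close> of the first row of \<open>B\<close> is attained by a unimodular change of basis, which
  makes \<open>B\<close> lower triangular with diagonal \<open>g, h\<close>.\<close>

lemma mat_lattice_int2_hermite:
  fixes B :: "int^2^2"
  assumes "det B \<noteq> 0"
  obtains g e h where "g > 0" and "g * h = det B"
    and "\<And>z. z \<in> mat_lattice B \<longleftrightarrow> g dvd z$1 \<and> h dvd z$2 - e * (z$1 div g)"
proof -
  define a where "a = B$1$1"
  define b where "b = B$1$2"
  define c where "c = B$2$1"
  define d where "d = B$2$2"
  have det: "det B = a * d - b * c" by (simp add: det_2 a_def b_def c_def d_def)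
  define g where "g = gcd a b"
  have "g > 0" using assms det by (auto simp: g_def)
  obtain a' b' where a': "a = g * a'" and b': "b = g * b'"
    unfolding g_def by (meson gcd_dvd1 gcd_dvd2 dvdE)
  obtain s t where "s * a + t * b = g" unfolding g_def using bezout_int by blast
  then have "g * (s * a' + t * b') = g * 1" by (simp add: a' b' algebra_simps)
  then have st: "s * a' + t * b' = 1" using \<open>g > 0\<close> by simp
  define h where "h = a' * d - b' * c"
  define e where "e = c * s + d * t"
  have "z \<in> mat_lattice B \<longleftrightarrow> g dvd z$1 \<and> h dvd z$2 - e * (z$1 div g)" for z
  proof
    assume "z \<in> mat_lattice B"
    then obtain w where w: "z = B *v w" by (auto simp: mat_lattice_def)
    have z1: "z$1 = g * (a' * w$1 + b' * w$2)"
      by (simp add: w matrix_vector_mult_2 flip: a_def b_def) (simp add: a' b' algebra_simps)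
    then have "z$2 - e * (z$1 div g) = c * w$1 + d * w$2 - e * (a' * w$1 + b' * w$2)"
      using \<open>g > 0\<close> by (simp add: w matrix_vector_mult_2 c_def d_def)
    also have "\<dots> = (c * w$1 + d * w$2) * (s * a' + t * b') - e * (a' * w$1 + b' * w$2)"
      by (simp add: st)
    also have "\<dots> = h * (s * w$2 - t * w$1)"
      by (simp add: h_def e_def algebra_simps)
    finally show "g dvd z$1 \<and> h dvd z$2 - e * (z$1 div g)"
      using z1 by simp
  next
    assume "g dvd z$1 \<and> h dvd z$2 - e * (z$1 div g)"
    then obtain q r where q: "z$1 = g * q" and r: "z$2 - e * (z$1 div g) = h * r"
      by (meson dvdE)
    have "z = B *v vector [s * q - b' * r, t * q + a' * r]"
    proof (simp add: vec2_eq_iff matrix_vector_mult_2 flip: a_def b_def c_def d_def, intro conjI)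
      have "a * (s * q - b' * r) + b * (t * q + a' * r) = g * q * (s * a' + t * b')"
        by (simp add: a' b' algebra_simps)
      then show "z$1 = a * (s * q - b' * r) + b * (t * q + a' * r)"
        using q st by simp
      have "z$2 = e * q + h * r" using r q \<open>g > 0\<close> by simp
      then show "z$2 = c * (s * q - b' * r) + d * (t * q + a' * r)"
        by (simp add: e_def h_def algebra_simps)
    qed
    then show "z \<in> mat_lattice B" by simp
  qed
  moreover have "g * h = det B" by (simp add: det h_def a' b' algebra_simps)
  ultimately show ?thesis using that \<open>g > 0\<close> by blast
qed

lemma card_image_eq_if_same_fibres:
  assumes "\<And>x y. x \<in> S \<Longrightarrow> y \<in> S \<Longrightarrow> f x = f y \<longleftrightarrow> g x = g y"
  shows "card (f ` S) = card (g ` S)" and "finite (f ` S) \<longleftrightarrow> finite (g ` S)"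
proof -
  have gf: "g (inv_into S f (f x)) = g x" and fg: "f (inv_into S g (g x)) = f x" if "x \<in> S" for x
    using assms[of "inv_into S f (f x)" x] assms[of "inv_into S g (g x)" x] that
    by (simp_all add: inv_into_into f_inv_into_f)
  have "bij_betw (\<lambda>u. g (inv_into S f u)) (f ` S) (g ` S)"
    by (rule bij_betw_byWitness[where f' = "\<lambda>v. f (inv_into S g v)"]) (auto simp: gf fg)
  then show "card (f ` S) = card (g ` S)" and "finite (f ` S) \<longleftrightarrow> finite (g ` S)"
    by (simp_all add: bij_betw_same_card bij_betw_finite)
qed

lemma card_lattice_cosets:
  fixes B :: "int^2^2"
  assumes "det B \<noteq> 0"
  shows "card (range (lattice_coset B)) = nat \<bar>det B\<bar>" and "finite (range (lattice_coset B))"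
proof -
  obtain g e h where "g > 0" and gh: "g * h = det B"
    and L: "\<And>z. z \<in> mat_lattice B \<longleftrightarrow> g dvd z$1 \<and> h dvd z$2 - e * (z$1 div g)"
    using mat_lattice_int2_hermite[OF assms] by metis
  have "h \<noteq> 0" using gh assms by auto
  define reduce where "reduce z = (z$1 mod g, (z$2 - e * (z$1 div g)) mod \<bar>h\<bar>)" for z :: "int^2"
  have "lattice_coset B x = lattice_coset B y \<longleftrightarrow> reduce x = reduce y" for x y
  proof (cases "x$1 mod g = y$1 mod g")
    case True
    then have "x$1 - y$1 = g * (x$1 div g - y$1 div g)"
      using mult_div_mod_eq[of g "x$1"] mult_div_mod_eq[of g "y$1"]
      unfolding right_diff_distrib by linarith
    then have q: "(x$1 - y$1) div g = x$1 div g - y$1 div g"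
      using \<open>g > 0\<close> by simp
    have r: "(x$2 - y$2) - e * ((x$1 - y$1) div g)
        = (x$2 - e * (x$1 div g)) - (y$2 - e * (y$1 div g))"
      by (simp only: q) (simp add: algebra_simps)
    show ?thesis
      using True unfolding lattice_coset_eq_iff L vector_minus_component r
      by (simp add: reduce_def mod_eq_dvd_iff)
  next
    case False
    then show ?thesis by (simp add: lattice_coset_eq_iff L reduce_def mod_eq_dvd_iff)
  qed
  then have fibres: "card (range (lattice_coset B)) = card (range reduce)"
    "finite (range (lattice_coset B)) \<longleftrightarrow> finite (range reduce)"
    using card_image_eq_if_same_fibres[of UNIV "lattice_coset B" reduce] by simp_all
  have "range reduce = {0..<g} \<times> {0..<\<bar>h\<bar>}"
  proof (rule Set.set_eqI, rule iffI)
    fix p assume "p \<in> range reduce"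
    then show "p \<in> {0..<g} \<times> {0..<\<bar>h\<bar>}"
      using \<open>g > 0\<close> \<open>h \<noteq> 0\<close> by (auto simp: reduce_def)
  next
    fix p assume "p \<in> {0..<g} \<times> {0..<\<bar>h\<bar>}"
    then have "reduce (vector [fst p, snd p]) = p" by (auto simp: reduce_def)
    then show "p \<in> range reduce" by (metis rangeI)
  qed
  moreover have "nat g * nat \<bar>h\<bar> = nat \<bar>det B\<bar>"
    using \<open>g > 0\<close> by (simp add: abs_mult nat_mult_distrib flip: gh)
  ultimately show "card (range (lattice_coset B)) = nat \<bar>det B\<bar>" "finite (range (lattice_coset B))"
    using fibres by (simp_all add: card_cartesian_product)
qed

lemma mpow_add: "mpow A (m + n) = mpow A m ** mpow A n"
  by (induction m) (simp_all add: matrix_mul_assoc)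

lemma mpow_Suc_right: "mpow A (Suc n) = mpow A n ** A"
  using mpow_add[of A n 1] by simp

lemma mpow_commute: "mpow A m ** mpow A n = mpow A n ** mpow A m"
  by (metis mpow_add add.commute)

lemma mpow_mult: "mpow A (m * n) = mpow (mpow A m) n"
  by (induction n) (simp_all add: mpow_add)

lemma mpow_mult_vector: "mpow A m *v (mpow A n *v x) = mpow A (m + n) *v x"
  by (simp add: mpow_add matrix_vector_mul_assoc)

lemma mpow_Suc_vector: "A *v (mpow A n *v x) = mpow A (Suc n) *v x"
  by (simp add: matrix_vector_mul_assoc)

lemma mpow_Suc_right_vector: "mpow A n *v (A *v x) = mpow A (Suc n) *v x"
  by (simp add: matrix_vector_mul_assoc flip: mpow_Suc_right)

lemma det_mpow: "det (mpow (A::'a::comm_ring_1^'n^'n) n) = det A ^ n"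
  by (induction n) (simp_all add: det_mul)

lemma matrix_diff_ldistrib: "(A::'a::comm_ring_1^'n^'m) ** (B - C) = A ** B - A ** C"
  by (simp add: matrix_matrix_mult_def vec_eq_iff sum_subtractf right_diff_distrib)

lemma matrix_diff_rdistrib: "((A::'a::comm_ring_1^'n^'m) - B) ** C = A ** C - B ** C"
  by (simp add: matrix_matrix_mult_def vec_eq_iff sum_subtractf left_diff_distrib)

lemma matrix_add_rdistrib: "((A::'a::comm_ring_1^'n^'m) + B) ** C = A ** C + B ** C"
  by (simp add: matrix_matrix_mult_def vec_eq_iff sum.distrib distrib_right)

lemma matrix_geometric_sum:
  fixes A :: "'a::comm_ring_1^'n^'n"
  shows "(mat 1 - A) ** (\<Sum>i<n. mpow A i) = mat 1 - mpow A n"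
    and "(\<Sum>i<n. mpow A i) ** (mat 1 - A) = mat 1 - mpow A n"
proof -
  show "(mat 1 - A) ** (\<Sum>i<n. mpow A i) = mat 1 - mpow A n"
    by (induction n) (simp_all add: matrix_add_ldistrib matrix_diff_rdistrib)
  show "(\<Sum>i<n. mpow A i) ** (mat 1 - A) = mat 1 - mpow A n"
  proof (induction n)
    case (Suc n)
    have "(\<Sum>i<Suc n. mpow A i) ** (mat 1 - A)
        = (\<Sum>i<n. mpow A i) ** (mat 1 - A) + (mpow A n - mpow A n ** A)"
      by (simp add: matrix_add_rdistrib matrix_diff_ldistrib)
    also have "\<dots> = (mat 1 - mpow A n) + (mpow A n - mpow A (Suc n))"
      by (simp only: Suc.IH mpow_Suc_right)
    finally show ?case by simp
  qed simp
qed

lemma det_one_minus_2: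
  fixes A :: "'a::comm_ring_1^2^2"
  shows "det (mat 1 - A) = 1 - trace A + det A"
  by (simp add: det_2 trace_def sum_2 mat_def algebra_simps)

lemma matrix_vector_mult_uminus: "(A::'a::comm_ring_1^'n^'m) *v (- x) = - (A *v x)"
  by (metis diff_0 matrix_vector_mult_0_right matrix_vector_mult_diff_distrib)

lemma matrix_vector_mult_smult: "(A::'a::comm_ring_1^'n^'m) *v (c *s x) = c *s (A *v x)"
  by (simp add: vec_eq_iff matrix_vector_mult_def sum_distrib_left mult_ac)

lemma matrix_vector_mult_sum: "(A::'a::comm_ring_1^'n^'m) *v sum f S = (\<Sum>x\<in>S. A *v f x)"
  by (induction S rule: infinite_finite_induct) (simp_all add: matrix_vector_right_distrib)

section \<open>Vectors fixed by a matrix power modulo the period lattice\<close>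

abbreviation period_lattice :: "'a::comm_ring_1^'n^'n \<Rightarrow> nat \<Rightarrow> ('a^'n) set" where
  "period_lattice A k \<equiv> mat_lattice (mat 1 - mpow A k)"

lemma mpow_mem_period_lattice:
  "z \<in> period_lattice A k \<Longrightarrow> mpow A a *v z \<in> period_lattice A k"
  by (rule mat_lattice_commute)
     (simp_all add: matrix_diff_ldistrib matrix_diff_rdistrib mpow_commute)

lemma mpow_period_diff_mem_period_lattice: "mpow A k *v z - z \<in> period_lattice A k"
proof -
  have "mpow A k *v z - z = (mat 1 - mpow A k) *v (- z)"
    by (simp add: matrix_vector_mult_diff_rdistrib matrix_vector_mult_diff_distrib
        matrix_vector_mult_uminus)
  then show ?thesis by simp
qed

lemma mpow_mem_period_lattice_iff:
  "mpow A k *v z \<in> period_lattice A k \<longleftrightarrow> z \<in> period_lattice A k"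
  using mat_lattice_diff_iff[OF mpow_period_diff_mem_period_lattice[of A k z], of "mpow A k *v z"]
  by simp

text \<open>\<open>A\<^sup>k\<^sup>-\<^sup>1\<close> inverts \<open>A\<close> modulo the period lattice.\<close>

lemma mult_mem_period_lattice_iff:
  assumes "0 < k"
  shows "A *v y \<in> period_lattice A k \<longleftrightarrow> y \<in> period_lattice A k"
proof
  assume "A *v y \<in> period_lattice A k"
  then have "mpow A (k - 1) *v (A *v y) \<in> period_lattice A k"
    by (rule mpow_mem_period_lattice)
  moreover have "mpow A (k - 1) *v (A *v y) = mpow A k *v y"
    using mpow_mult_vector[of A "k - 1" 1 y] assms by simp
  ultimately show "y \<in> period_lattice A k"
    by (metis mpow_mem_period_lattice_iff)
next
  assume "y \<in> period_lattice A k"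
  then show "A *v y \<in> period_lattice A k"
    using mpow_mem_period_lattice[of y A k 1] by simp
qed

definition fixed_modulo :: "'a::comm_ring_1^'n^'n \<Rightarrow> nat \<Rightarrow> nat \<Rightarrow> ('a^'n) set" where
  "fixed_modulo A k d = {x. mpow A d *v x - x \<in> period_lattice A k}"

lemma fixed_modulo_mult:
  assumes "x \<in> fixed_modulo A k d"
  shows "x \<in> fixed_modulo A k (d * j)"
proof (induction j)
  case (Suc j)
  have eq: "mpow A (d * Suc j) *v x - x
     = mpow A (d * j) *v (mpow A d *v x - x) + (mpow A (d * j) *v x - x)"
    by (simp add: matrix_vector_mult_diff_distrib mpow_mult_vector algebra_simps)
  from Suc assms have "mpow A (d * j) *v (mpow A d *v x - x) + (mpow A (d * j) *v x - x)
      \<in> period_lattice A k"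
    by (intro mat_lattice_add mpow_mem_period_lattice) (simp_all add: fixed_modulo_def)
  then show ?case unfolding fixed_modulo_def mem_Collect_eq eq .
qed (simp add: fixed_modulo_def)

lemma fixed_modulo_period: "x \<in> fixed_modulo A k k"
  by (simp add: fixed_modulo_def mpow_period_diff_mem_period_lattice)

lemma fixed_modulo_gcd:
  assumes "0 < k"
  shows "fixed_modulo A k a = fixed_modulo A k (gcd a k)"
proof
  show "fixed_modulo A k (gcd a k) \<subseteq> fixed_modulo A k a"
    by (metis fixed_modulo_mult gcd_dvd1 dvdE subsetI)
next
  show "fixed_modulo A k a \<subseteq> fixed_modulo A k (gcd a k)"
  proof
    fix x assume "x \<in> fixed_modulo A k a"
    obtain u v where uv: "k * u = a * v + gcd k a"
      using bezout_nat[of k a] assms by auto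
    have "mpow A (k * u) *v x - x \<in> period_lattice A k"
      using fixed_modulo_mult[OF fixed_modulo_period] by (simp add: fixed_modulo_def)
    moreover have "mpow A (a * v) *v x - x \<in> period_lattice A k"
      using fixed_modulo_mult[OF \<open>x \<in> fixed_modulo A k a\<close>] by (simp add: fixed_modulo_def)
    ultimately have "(mpow A (k * u) *v x - x) - mpow A (gcd a k) *v (mpow A (a * v) *v x - x)
        \<in> period_lattice A k"
      by (blast intro: mat_lattice_diff mpow_mem_period_lattice)
    also have "(mpow A (k * u) *v x - x) - mpow A (gcd a k) *v (mpow A (a * v) *v x - x)
        = mpow A (gcd a k) *v x - x"
      by (simp add: uv mpow_mult_vector matrix_vector_mult_diff_distrib gcd.commute add.commute)
    finally show "x \<in> fixed_modulo A k (gcd a k)" by (simp add: fixed_modulo_def)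
  qed
qed

text \<open>For \<open>d\<close> dividing \<open>k\<close>, \<open>1 - A\<^sup>k = (1 - A\<^sup>d) S = S (1 - A\<^sup>d)\<close> with
  \<open>S = 1 + A\<^sup>d + \<dots> + A\<^sup>k\<^sup>-\<^sup>d\<close>, and the vectors fixed by \<open>A\<^sup>d\<close> modulo \<open>(1 - A\<^sup>k) \<int>\<^sup>2\<close> form \<open>S \<int>\<^sup>2\<close>.\<close>

lemma card_fixed_modulo:
  fixes A :: "int^2^2"
  assumes "d dvd k" and det: "det (mat 1 - mpow A k) \<noteq> 0"
  shows "card (lattice_coset (mat 1 - mpow A k) ` fixed_modulo A k d) = nat \<bar>det (mat 1 - mpow A d)\<bar>"
proof -
  define D where "D = mat 1 - mpow A d"
  define S where "S = (\<Sum>i<k div d. mpow (mpow A d) i)"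
  have "mpow (mpow A d) (k div d) = mpow A k"
    using assms(1) by (simp flip: mpow_mult)
  then have DS: "D ** S = mat 1 - mpow A k" and SD: "S ** D = mat 1 - mpow A k"
    using matrix_geometric_sum[of "mpow A d" "k div d"] by (simp_all add: D_def S_def)
  then have "det D \<noteq> 0" "det S \<noteq> 0"
    using det det_mul[of D S] by auto
  then have inj_D: "inj ((*v) D)" and inj_S: "inj ((*v) S)"
    by (simp_all add: inj_matrix_vector_mult_int2)
  have "fixed_modulo A k d = range ((*v) S)"
  proof safe
    fix x assume "x \<in> fixed_modulo A k d"
    then obtain w where "mpow A d *v x - x = (mat 1 - mpow A k) *v w"
      by (auto simp: fixed_modulo_def mat_lattice_def)
    then have "D *v x = (mat 1 - mpow A k) *v (- w)"
      by (simp add: D_def matrix_vector_mult_diff_rdistrib matrix_vector_mult_uminus)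
        (metis minus_diff_eq)
    also have "\<dots> = D *v (S *v (- w))"
      by (simp add: matrix_vector_mul_assoc DS)
    finally show "x \<in> range ((*v) S)" using injD[OF inj_D] by blast
  next
    fix z
    have "mpow A d *v (S *v z) - S *v z = - (D *v (S *v z))"
      by (simp add: D_def matrix_vector_mult_diff_rdistrib)
    also have "\<dots> = (mat 1 - mpow A k) *v (- z)"
      by (simp add: matrix_vector_mul_assoc DS matrix_vector_mult_uminus)
    finally show "S *v z \<in> fixed_modulo A k d" by (simp add: fixed_modulo_def)
  qed
  then have "lattice_coset (mat 1 - mpow A k) ` fixed_modulo A k d
      = range (\<lambda>x. lattice_coset (mat 1 - mpow A k) (S *v x))"
    by (simp add: image_image)
  moreover have "lattice_coset (mat 1 - mpow A k) (S *v x) = lattice_coset (mat 1 - mpow A k) (S *v y)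
      \<longleftrightarrow> lattice_coset D x = lattice_coset D y" for x y
    using mult_mem_mat_lattice_mult_iff[OF inj_S, of "x - y" D]
    by (simp add: lattice_coset_eq_iff SD matrix_vector_mult_diff_distrib)
  then have "card (range (\<lambda>x. lattice_coset (mat 1 - mpow A k) (S *v x)))
      = card (range (lattice_coset D))"
    by (rule card_image_eq_if_same_fibres(1))
  ultimately show ?thesis
    using card_lattice_cosets(1)[OF \<open>det D \<noteq> 0\<close>] by (simp add: D_def)
qed

section \<open>Counting orbits of a cyclic action\<close>

lemma funpow_mod_eq:
  assumes "(f ^^ k) x = x"
  shows "(f ^^ (m mod k)) x = (f ^^ m) x"
proof -
  have "(f ^^ (k * q)) x = x" for q
    by (induction q) (simp_all add: funpow_add assms)
  then have "(f ^^ (m mod k)) x = (f ^^ (m mod k)) ((f ^^ (k * (m div k))) x)" by simp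
  also have "\<dots> = (f ^^ (m mod k + k * (m div k))) x" by (simp only: funpow_add o_apply)
  also have "\<dots> = (f ^^ m) x" by simp
  finally show ?thesis .
qed

lemma image_funpow:
  fixes f :: "'a \<Rightarrow> 'a"
  shows "((`) f ^^ m) C = (f ^^ m) ` C"
  by (induction m) (simp_all add: image_comp)

lemma bij_betw_if_funpow_id:
  assumes maps: "\<And>x. x \<in> X \<Longrightarrow> f x \<in> X" and period: "\<And>x. x \<in> X \<Longrightarrow> (f ^^ k) x = x"
    and "0 < k"
  shows "bij_betw f X X"
proof -
  obtain n where k: "k = Suc n" using \<open>0 < k\<close> by (cases k) auto
  have "(f ^^ m) x \<in> X" if "x \<in> X" for m x
    using that by (induction m) (simp_all add: maps)
  then show ?thesis
    by (intro bij_betw_byWitness[where f' = "f ^^ n"])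
       (use period maps in \<open>auto simp: k funpow_swap1\<close>)
qed

lemma carrier_integer_mod_group_pos:
  "0 < k \<Longrightarrow> carrier (integer_mod_group k) = int ` {..<k}"
  by (simp add: carrier_integer_mod_group lessThan_atLeast0 image_int_atLeastLessThan)

lemma group_action_funpow:
  fixes f :: "'a \<Rightarrow> 'a"
  assumes "0 < k" and bij: "bij_betw f X X" and period: "\<And>x. x \<in> X \<Longrightarrow> (f ^^ k) x = x"
  shows "group_action (integer_mod_group k) X (\<lambda>i. restrict (f ^^ nat i) X)"
  unfolding group_action_def group_hom_def group_hom_axioms_def
proof (intro conjI)
  let ?G = "integer_mod_group k" and ?\<phi> = "\<lambda>i. restrict (f ^^ nat i) X"
  show "group ?G" "group (BijGroup X)" by (simp_all add: group_BijGroup)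
  have maps: "(f ^^ m) x \<in> X" if "x \<in> X" for m x
    using bij_betwE[OF bij_betw_funpow[OF bij]] that by blast
  have mod_eq: "(f ^^ (m mod k)) x = (f ^^ m) x" if "x \<in> X" for m x
    by (rule funpow_mod_eq[OF period[OF that]])
  have Bij: "?\<phi> i \<in> Bij X" for i
    using bij_betw_funpow[OF bij, of "nat i"] by (simp add: Bij_def)
  show "?\<phi> \<in> hom ?G (BijGroup X)"
  proof (rule homI)
    fix i j assume "i \<in> carrier ?G" "j \<in> carrier ?G"
    then have "nat ((i + j) mod int k) = (nat i + nat j) mod k"
      using assms(1)
      by (auto simp: carrier_integer_mod_group_pos nat_mod_distrib simp flip: of_nat_add)
    then show "?\<phi> (i \<otimes>\<^bsub>?G\<^esub> j) = ?\<phi> i \<otimes>\<^bsub>BijGroup X\<^esub> ?\<phi> j"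
      using Bij by (auto simp: BijGroup_def compose_def mod_eq maps funpow_add)
  qed (simp add: BijGroup_def Bij)
qed

lemma card_orbits_cyclic_action:
  fixes f :: "'a \<Rightarrow> 'a"
  assumes "finite X" and maps: "\<And>x. x \<in> X \<Longrightarrow> f x \<in> X"
    and period: "\<And>x. x \<in> X \<Longrightarrow> (f ^^ k) x = x" and "0 < k"
  shows "card ((\<lambda>x. {(f ^^ m) x | m. True}) ` X) * k = (\<Sum>m<k. card {x \<in> X. (f ^^ m) x = x})"
proof -
  define G where "G = integer_mod_group k"
  define \<phi> where "\<phi> i = restrict (f ^^ nat i) X" for i :: int
  have carrier: "carrier G = int ` {..<k}"
    using \<open>0 < k\<close> by (simp add: G_def carrier_integer_mod_group_pos)
  have "group_action G X \<phi>"
    unfolding G_def \<phi>_def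
    by (rule group_action_funpow[OF \<open>0 < k\<close> bij_betw_if_funpow_id[OF maps period \<open>0 < k\<close>] period])
  then have "card (orbits G X \<phi>) * order G = (\<Sum>i\<in>carrier G. card (invariants X \<phi> i))"
    by (rule group_action.burnside) (simp_all add: carrier \<open>finite X\<close>)
  moreover have "orbit G \<phi> x = {(f ^^ m) x | m. True}" if "x \<in> X" for x
  proof -
    have "(f ^^ m) x \<in> (\<lambda>m. (f ^^ m) x) ` {..<k}" for m
      using funpow_mod_eq[OF period[OF that], of m] \<open>0 < k\<close>
      by (metis image_eqI lessThan_iff mod_less_divisor)
    moreover have "orbit G \<phi> x = (\<lambda>i. (f ^^ nat i) x) ` carrier G"
      using that by (auto simp: orbit_def \<phi>_def)
    then have "orbit G \<phi> x = (\<lambda>m. (f ^^ m) x) ` {..<k}"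
      by (simp add: carrier image_image)
    ultimately show ?thesis by blast
  qed
  then have "orbits G X \<phi> = (\<lambda>x. {(f ^^ m) x | m. True}) ` X"
    by (auto simp: orbits_def)
  moreover have "order G = k"
    by (simp add: order_def carrier card_image)
  moreover have "invariants X \<phi> (int m) = {x \<in> X. (f ^^ m) x = x}" for m
    by (auto simp: invariants_def \<phi>_def)
  then have "(\<Sum>i\<in>carrier G. card (invariants X \<phi> i)) = (\<Sum>m<k. card {x \<in> X. (f ^^ m) x = x})"
    by (simp add: carrier sum.reindex)
  ultimately show ?thesis by simp
qed

lemma sum_gcd_eq_sum_totient:
  fixes f :: "nat \<Rightarrow> 'a::comm_semiring_1"
  assumes "0 < k"
  shows "(\<Sum>m<k. f (gcd m k)) = (\<Sum>d | d dvd k. of_nat (totient (k div d)) * f d)"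
proof -
  have "(\<Sum>m<k. f (gcd m k)) = (\<Sum>m\<in>{0<..k}. f (gcd m k))"
    by (rule sum.reindex_bij_witness[where j = "\<lambda>m. if m = 0 then k else m"
          and i = "\<lambda>m. if m = k then 0 else m"]) (use assms in auto)
  also have "\<dots> = (\<Sum>d | d dvd k. \<Sum>m \<in> {m \<in> {0<..k}. gcd m k = d}. f (gcd m k))"
    by (rule sum.group[symmetric]) (use assms in auto)
  also have "\<dots> = (\<Sum>d | d dvd k. of_nat (totient (k div d)) * f d)"
  proof (rule sum.cong[OF refl])
    fix d assume "d \<in> {d. d dvd k}"
    then have "card {m \<in> {0<..k}. gcd m k = d} = totient (k div d)"
      using card_gcd_eq_totient[OF assms] by simp
    moreover have "(\<Sum>m \<in> {m \<in> {0<..k}. gcd m k = d}. f (gcd m k))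
        = (\<Sum>m \<in> {m \<in> {0<..k}. gcd m k = d}. f d)"
      by (rule sum.cong) simp_all
    ultimately show "(\<Sum>m \<in> {m \<in> {0<..k}. gcd m k = d}. f (gcd m k))
        = of_nat (totient (k div d)) * f d"
      by simp
  qed
  finally show ?thesis .
qed

section \<open>The cokernel of \<open>Id - (1 2 \<dots> k) \<otimes> \<gamma>\<close>\<close>

lemma bij_betw_image_equiv_class:
  assumes "bij_betw f A A" and "r \<subseteq> A \<times> A"
    and "\<And>x y. x \<in> A \<Longrightarrow> y \<in> A \<Longrightarrow> (f x, f y) \<in> r \<longleftrightarrow> (x, y) \<in> r" and "x \<in> A"
  shows "f ` (r `` {x}) = r `` {f x}"
proof
  show "f ` (r `` {x}) \<subseteq> r `` {f x}" using assms(2-4) by auto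
  show "r `` {f x} \<subseteq> f ` (r `` {x})"
  proof
    fix z assume "z \<in> r `` {f x}"
    moreover from this obtain y where "y \<in> A" "z = f y"
      using assms(1,2) by (auto simp: bij_betw_def)
    ultimately show "z \<in> f ` (r `` {x})" using assms(3,4) by auto
  qed
qed

definition twisted_sum :: "nat \<Rightarrow> int^2^2 \<Rightarrow> (nat \<Rightarrow> int^2) \<Rightarrow> int^2" where
  "twisted_sum k g u = (\<Sum>j<k. mpow g (k - j) *v u j)"

definition slot0 :: "int^2 \<Rightarrow> nat \<Rightarrow> int^2" where
  "slot0 x = (\<lambda>j. if j = 0 then x else 0)"

definition orbit_slots :: "nat \<Rightarrow> int^2^2 \<Rightarrow> int^2 \<Rightarrow> nat \<Rightarrow> int^2" where
  "orbit_slots k g y = (\<lambda>i. if i < k then mpow g i *v y else 0)"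

definition partial_twisted_sums :: "nat \<Rightarrow> int^2^2 \<Rightarrow> (nat \<Rightarrow> int^2) \<Rightarrow> nat \<Rightarrow> int^2" where
  "partial_twisted_sums k g u = (\<lambda>i. if i < k then (\<Sum>j\<le>i. mpow g (i - j) *v u j) else 0)"

lemma slot0_Zvec: "0 < k \<Longrightarrow> slot0 x \<in> Zvec k"
  by (simp add: Zvec_def slot0_def)

lemma Zvec_diff: "u \<in> Zvec k \<Longrightarrow> v \<in> Zvec k \<Longrightarrow> u - v \<in> Zvec k"
  by (simp add: Zvec_def)

lemma cyc_perm_0: "0 < k \<Longrightarrow> cyc_perm k u 0 = u (k - 1)"
  by (simp add: cyc_perm_def cyc_tensor_def)

lemma cyc_perm_Suc: "Suc i < k \<Longrightarrow> cyc_perm k u (Suc i) = u i"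
  by (simp add: cyc_perm_def cyc_tensor_def)

lemma cyc_perm_Zvec: "cyc_perm k u \<in> Zvec k"
  by (simp add: Zvec_def cyc_perm_def cyc_tensor_def)

lemma cyc_perm_diff: "cyc_perm k (u - v) = cyc_perm k u - cyc_perm k v"
  by (simp add: fun_eq_iff cyc_perm_def cyc_tensor_def)

lemma Mmap_apply: "Mmap k g v j = v j - g *v cyc_perm k v j"
  by (simp add: Mmap_def cyc_perm_def cyc_tensor_def)

lemma Mmap_add: "Mmap k g (u + v) = Mmap k g u + Mmap k g v"
  by (simp add: fun_eq_iff Mmap_apply cyc_perm_def cyc_tensor_def matrix_vector_right_distrib)

lemma bij_betw_cyc_perm:
  assumes "0 < k"
  shows "bij_betw (cyc_perm k) (Zvec k) (Zvec k)"
proof (rule bij_betw_byWitness[where f' = "\<lambda>v j. if j < k then v (Suc j mod k) else 0"])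
  have "(Suc j mod k + k - 1) mod k = j" "Suc ((j + k - 1) mod k) mod k = j" if "j < k" for j
  proof -
    have e: "Suc j mod k + k - 1 = Suc j mod k + (k - 1)" "Suc j + (k - 1) = j + k"
      using assms by simp_all
    show "(Suc j mod k + k - 1) mod k = j"
      unfolding e(1) mod_add_left_eq e(2) using that by simp
    show "Suc ((j + k - 1) mod k) mod k = j"
      using that assms by (simp add: mod_Suc_eq)
  qed
  then show "\<forall>v\<in>Zvec k. (\<lambda>j. if j < k then cyc_perm k v (Suc j mod k) else 0) = v"
    and "\<forall>v\<in>Zvec k. cyc_perm k (\<lambda>j. if j < k then v (Suc j mod k) else 0) = v"
    by (auto simp: fun_eq_iff Zvec_def cyc_perm_def cyc_tensor_def)
qed (auto simp: Zvec_def cyc_perm_def cyc_tensor_def)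

lemma twisted_sum_diff: "twisted_sum k g (u - v) = twisted_sum k g u - twisted_sum k g v"
  by (simp add: twisted_sum_def matrix_vector_mult_diff_distrib sum_subtractf)

lemma twisted_sum_smult: "twisted_sum k g (\<lambda>j. c *s u j) = c *s twisted_sum k g u"
  by (simp add: twisted_sum_def matrix_vector_mult_smult sum_cmul)

lemma twisted_sum_mult: "twisted_sum k g (\<lambda>j. g *v u j) = g *v twisted_sum k g u"
  by (simp add: twisted_sum_def matrix_vector_mult_sum mpow_Suc_vector mpow_Suc_right_vector)

lemma twisted_sum_slot0: "0 < k \<Longrightarrow> twisted_sum k g (slot0 x) = mpow g k *v x"
  by (cases k) (simp_all add: twisted_sum_def slot0_def sum.lessThan_Suc_shift del: sum.lessThan_Suc)

lemma twisted_sum_cyc_perm: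
  assumes "0 < k"
  shows "g *v twisted_sum k g (cyc_perm k u)
    = twisted_sum k g u - (mat 1 - mpow g k) *v (g *v u (k - 1))"
proof -
  obtain n where k: "k = Suc n" using assms by (cases k) auto
  then have n: "k - 1 = n" by simp
  have "g *v twisted_sum k g (cyc_perm k u)
      = g *v (mpow g k *v u n) + (\<Sum>i<n. g *v (mpow g (n - i) *v cyc_perm k u (Suc i)))"
    by (simp add: twisted_sum_def k sum.lessThan_Suc_shift cyc_perm_0 matrix_vector_mult_sum
        matrix_vector_right_distrib del: sum.lessThan_Suc)
  also have "(\<Sum>i<n. g *v (mpow g (n - i) *v cyc_perm k u (Suc i))) = (\<Sum>i<n. mpow g (k - i) *v u i)"
    by (rule sum.cong) (simp_all add: k cyc_perm_Suc mpow_Suc_vector Suc_diff_le)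
  also have "\<dots> = twisted_sum k g u - g *v u n"
    by (simp add: twisted_sum_def k)
  finally show ?thesis
    unfolding n
    by (simp add: matrix_vector_mult_diff_rdistrib mpow_Suc_vector mpow_Suc_right_vector algebra_simps)
qed

lemma twisted_sum_Mmap:
  assumes "0 < k"
  shows "twisted_sum k g (Mmap k g w) = (mat 1 - mpow g k) *v (g *v w (k - 1))"
proof -
  have "Mmap k g w = w - (\<lambda>j. g *v cyc_perm k w j)"
    by (simp add: fun_eq_iff Mmap_apply)
  then show ?thesis
    by (simp add: twisted_sum_diff twisted_sum_mult twisted_sum_cyc_perm[OF assms])
qed

lemma Mmap_orbit_slots:
  assumes "0 < k"
  shows "Mmap k g (orbit_slots k g y) = slot0 ((mat 1 - mpow g k) *v y)"
proof
  fix j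
  consider "j = 0" | i where "j = Suc i" "j < k" | "k \<le> j" by (cases j) fastforce+
  then show "Mmap k g (orbit_slots k g y) j = slot0 ((mat 1 - mpow g k) *v y) j"
  proof cases
    case 1
    then show ?thesis using assms
      by (simp add: Mmap_apply cyc_perm_0 orbit_slots_def slot0_def mpow_Suc_vector
          matrix_vector_mult_diff_rdistrib)
  qed (use assms in \<open>simp_all add: Mmap_apply cyc_perm_Suc orbit_slots_def slot0_def
      mpow_Suc_vector cyc_perm_def cyc_tensor_def\<close>)
qed

lemma mult_partial_twisted_sums:
  assumes "i < k"
  shows "g *v partial_twisted_sums k g u i = (\<Sum>j\<le>i. mpow g (Suc i - j) *v u j)"
proof -
  have "g *v partial_twisted_sums k g u i = (\<Sum>j\<le>i. g *v (mpow g (i - j) *v u j))"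
    using assms by (simp add: partial_twisted_sums_def matrix_vector_mult_sum)
  also have "\<dots> = (\<Sum>j\<le>i. mpow g (Suc i - j) *v u j)"
    by (rule sum.cong) (simp_all add: mpow_Suc_vector Suc_diff_le)
  finally show ?thesis .
qed

lemma Mmap_partial_twisted_sums:
  assumes "0 < k" and "u \<in> Zvec k"
  shows "Mmap k g (partial_twisted_sums k g u) = u - slot0 (twisted_sum k g u)"
proof
  fix j
  consider "j = 0" | i where "j = Suc i" "j < k" | "k \<le> j" by (cases j) fastforce+
  then show "Mmap k g (partial_twisted_sums k g u) j = (u - slot0 (twisted_sum k g u)) j"
  proof cases
    case 1
    obtain n where k: "k = Suc n" using assms(1) by (cases k) auto
    have sum: "g *v partial_twisted_sums k g u (k - 1) = twisted_sum k g u"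
      using mult_partial_twisted_sums[of n k g u] by (simp add: k twisted_sum_def lessThan_Suc_atMost)
    show ?thesis
      unfolding 1 Mmap_apply cyc_perm_0[OF assms(1)] sum
      using assms(1) by (simp add: partial_twisted_sums_def slot0_def)
  next
    case (2 i)
    then have "Suc i < k" by simp
    have "g *v partial_twisted_sums k g u i = (\<Sum>j\<le>i. mpow g (Suc i - j) *v u j)"
      using \<open>Suc i < k\<close> by (simp add: mult_partial_twisted_sums)
    then show ?thesis
      unfolding \<open>j = Suc i\<close> Mmap_apply cyc_perm_Suc[OF \<open>Suc i < k\<close>]
      using \<open>Suc i < k\<close> by (simp add: partial_twisted_sums_def slot0_def)
  next
    case 3
    then show ?thesis using assms
      by (simp add: Mmap_apply partial_twisted_sums_def slot0_def Zvec_def cyc_perm_def cyc_tensor_def)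
  qed
qed

lemma mem_Img_iff:
  assumes "0 < k" and "u \<in> Zvec k"
  shows "u \<in> Img k g \<longleftrightarrow> twisted_sum k g u \<in> period_lattice g k"
proof
  assume "u \<in> Img k g"
  then show "twisted_sum k g u \<in> period_lattice g k"
    by (auto simp: Img_def twisted_sum_Mmap[OF assms(1)])
next
  assume "twisted_sum k g u \<in> period_lattice g k"
  then obtain y where y: "twisted_sum k g u = (mat 1 - mpow g k) *v y"
    by (auto simp: mat_lattice_def)
  have "u = Mmap k g (partial_twisted_sums k g u + orbit_slots k g y)"
    by (simp add: Mmap_add Mmap_partial_twisted_sums Mmap_orbit_slots assms y)
  moreover have "partial_twisted_sums k g u + orbit_slots k g y \<in> Zvec k"
    by (simp add: Zvec_def partial_twisted_sums_def orbit_slots_def)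
  ultimately show "u \<in> Img k g" by (auto simp: Img_def)
qed

lemma coker_rel_iff:
  assumes "0 < k"
  shows "(u, v) \<in> coker_rel k g \<longleftrightarrow>
    u \<in> Zvec k \<and> v \<in> Zvec k \<and> twisted_sum k g u - twisted_sum k g v \<in> period_lattice g k"
  using mem_Img_iff[OF assms Zvec_diff] by (auto simp: coker_rel_def twisted_sum_diff)

lemma equiv_coker_rel:
  assumes "0 < k"
  shows "equiv (Zvec k) (coker_rel k g)"
proof (rule equivI)
  show "coker_rel k g \<subseteq> Zvec k \<times> Zvec k"
    by (auto simp: coker_rel_def)
  show "refl_on (Zvec k) (coker_rel k g)"
    by (auto simp: refl_on_def coker_rel_iff[OF assms])
  show "sym (coker_rel k g)"
  proof (rule symI)
    fix u v assume "(u, v) \<in> coker_rel k g"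
    then show "(v, u) \<in> coker_rel k g"
      using mat_lattice_uminus[of "twisted_sum k g u - twisted_sum k g v" "mat 1 - mpow g k"]
      by (simp add: coker_rel_iff[OF assms])
  qed
  show "trans (coker_rel k g)"
  proof (rule transI)
    fix u v w assume "(u, v) \<in> coker_rel k g" "(v, w) \<in> coker_rel k g"
    then show "(u, w) \<in> coker_rel k g"
      using mat_lattice_add[of "twisted_sum k g u - twisted_sum k g v" "mat 1 - mpow g k"
          "twisted_sum k g v - twisted_sum k g w"]
      by (simp add: coker_rel_iff[OF assms])
  qed
qed

lemma coker_tors_eq:
  assumes "0 < k" and "det (mat 1 - mpow g k) \<noteq> 0"
  shows "coker_tors k g = Zvec k // coker_rel k g"
proof -
  have "(\<lambda>i. of_nat (nat \<bar>det (mat 1 - mpow g k)\<bar>) *s v i) \<in> Img k g" if "v \<in> Zvec k" for v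
    using that abs_det_smult_mem_mat_lattice
    by (subst mem_Img_iff[OF assms(1)]) (simp_all add: Zvec_def twisted_sum_smult)
  moreover have "nat \<bar>det (mat 1 - mpow g k)\<bar> > 0"
    using assms(2) by simp
  ultimately have "{v \<in> Zvec k. \<exists>n::nat. n > 0 \<and> (\<lambda>i. of_nat n *s v i) \<in> Img k g} = Zvec k"
    by blast
  then show ?thesis by (simp add: coker_tors_def)
qed

definition coker_class :: "nat \<Rightarrow> int^2^2 \<Rightarrow> int^2 \<Rightarrow> (nat \<Rightarrow> int^2) set" where
  "coker_class k g x = coker_rel k g `` {slot0 x}"

lemma coker_rel_class_eq:
  assumes "0 < k" and "u \<in> Zvec k"
  shows "coker_rel k g `` {u} = coker_class k g (twisted_sum k g u)"
  unfolding coker_class_def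
proof (rule equiv_class_eq[OF equiv_coker_rel[OF assms(1)]])
  have "twisted_sum k g u - mpow g k *v twisted_sum k g u \<in> period_lattice g k"
    using mat_lattice_uminus[OF mpow_period_diff_mem_period_lattice] by simp
  then show "(u, slot0 (twisted_sum k g u)) \<in> coker_rel k g"
    using assms by (simp add: coker_rel_iff twisted_sum_slot0 slot0_Zvec)
qed

lemma coker_class_eq_iff:
  assumes "0 < k"
  shows "coker_class k g x = coker_class k g y \<longleftrightarrow> x - y \<in> period_lattice g k"
proof -
  have "coker_class k g x = coker_class k g y \<longleftrightarrow> mpow g k *v (x - y) \<in> period_lattice g k"
    unfolding coker_class_def
    by (simp add: eq_equiv_class_iff[OF equiv_coker_rel[OF assms]] slot0_Zvec coker_rel_iff assms
        twisted_sum_slot0 matrix_vector_mult_diff_distrib)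
  then show ?thesis by (simp add: mpow_mem_period_lattice_iff)
qed

lemma quotient_coker_rel:
  assumes "0 < k"
  shows "Zvec k // coker_rel k g = range (coker_class k g)"
proof safe
  fix C assume "C \<in> Zvec k // coker_rel k g"
  then show "C \<in> range (coker_class k g)"
    by (auto simp: quotient_def coker_rel_class_eq[OF assms])
next
  fix x show "coker_class k g x \<in> Zvec k // coker_rel k g"
    using assms by (simp add: coker_class_def quotientI Zvec_def slot0_def)
qed

lemma cyc_perm_coker_rel_iff:
  assumes "0 < k" and "u \<in> Zvec k" and "v \<in> Zvec k"
  shows "(cyc_perm k u, cyc_perm k v) \<in> coker_rel k g \<longleftrightarrow> (u, v) \<in> coker_rel k g"
proof -
  have eq: "g *v (twisted_sum k g (cyc_perm k u) - twisted_sum k g (cyc_perm k v))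
    = (twisted_sum k g u - twisted_sum k g v) - (mat 1 - mpow g k) *v (g *v (u - v) (k - 1))"
    using twisted_sum_cyc_perm[OF assms(1), of g "u - v"]
    by (simp add: twisted_sum_diff cyc_perm_diff matrix_vector_mult_diff_distrib)
  have "(cyc_perm k u, cyc_perm k v) \<in> coker_rel k g
      \<longleftrightarrow> twisted_sum k g (cyc_perm k u) - twisted_sum k g (cyc_perm k v) \<in> period_lattice g k"
    by (simp add: coker_rel_iff assms(1) cyc_perm_Zvec)
  also have "\<dots> \<longleftrightarrow> twisted_sum k g u - twisted_sum k g v \<in> period_lattice g k"
    by (subst mult_mem_period_lattice_iff[OF assms(1), symmetric])
      (simp only: eq mat_lattice_diff_iff mat_latticeI)
  finally show ?thesis using assms by (simp add: coker_rel_iff)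
qed

lemma cyc_perm_image_coker_class:
  assumes "0 < k"
  shows "cyc_perm k ` coker_class k g x = coker_class k g (mpow g (k - 1) *v x)"
proof -
  have "cyc_perm k ` coker_class k g x = coker_rel k g `` {cyc_perm k (slot0 x)}"
    unfolding coker_class_def
    by (rule bij_betw_image_equiv_class[OF bij_betw_cyc_perm[OF assms] _
          cyc_perm_coker_rel_iff[OF assms] slot0_Zvec[OF assms]])
       (auto simp: coker_rel_def)
  also have "\<dots> = coker_class k g (twisted_sum k g (cyc_perm k (slot0 x)))"
    by (rule coker_rel_class_eq[OF assms cyc_perm_Zvec])
  also have "\<dots> = coker_class k g (mpow g (k - 1) *v x)"
  proof -
    have "g *v (mpow g (k - 1) *v x) = mpow g k *v x"
      using assms by (simp add: mpow_Suc_vector)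
    then have "g *v (twisted_sum k g (cyc_perm k (slot0 x)) - mpow g (k - 1) *v x)
        = - ((mat 1 - mpow g k) *v (g *v slot0 x (k - 1)))"
      by (simp add: twisted_sum_cyc_perm assms twisted_sum_slot0 matrix_vector_mult_diff_distrib)
    then have "twisted_sum k g (cyc_perm k (slot0 x)) - mpow g (k - 1) *v x \<in> period_lattice g k"
      by (subst mult_mem_period_lattice_iff[OF assms, symmetric]) (simp add: mat_lattice_uminus)
    then show ?thesis by (simp add: coker_class_eq_iff assms)
  qed
  finally show ?thesis .
qed

lemma funpow_image_coker_class:
  assumes "0 < k"
  shows "((`) (cyc_perm k) ^^ m) (coker_class k g x) = coker_class k g (mpow g ((k - 1) * m) *v x)"
  by (induction m arbitrary: x) (simp_all add: cyc_perm_image_coker_class assms mpow_mult_vector)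

lemma finite_range_coker_class:
  assumes "0 < k" and "det (mat 1 - mpow g k) \<noteq> 0"
  shows "finite (range (coker_class k g))"
proof -
  have "finite (range (coker_class k g)) \<longleftrightarrow> finite (range (lattice_coset (mat 1 - mpow g k)))"
    by (rule card_image_eq_if_same_fibres(2))
       (simp add: coker_class_eq_iff assms(1) lattice_coset_eq_iff)
  then show ?thesis using card_lattice_cosets(2)[OF assms(2)] by simp
qed

lemma card_fixed_coker_classes:
  assumes "0 < k" and "det (mat 1 - mpow g k) \<noteq> 0"
  shows "card {C \<in> range (coker_class k g). ((`) (cyc_perm k) ^^ m) C = C}
    = nat \<bar>det (mat 1 - mpow g (gcd m k))\<bar>"
proof -
  have gcd: "gcd ((k - 1) * m) k = gcd m k"
    by (rule gcd_mult_left_left_cancel[OF coprime_diff_one_right_nat[OF assms(1)]])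
  have "((`) (cyc_perm k) ^^ m) (coker_class k g x) = coker_class k g x
      \<longleftrightarrow> x \<in> fixed_modulo g k ((k - 1) * m)" for x
    by (simp add: funpow_image_coker_class coker_class_eq_iff assms(1) fixed_modulo_def)
  then have "((`) (cyc_perm k) ^^ m) (coker_class k g x) = coker_class k g x
      \<longleftrightarrow> x \<in> fixed_modulo g k (gcd m k)" for x
    unfolding fixed_modulo_gcd[OF assms(1), of g "(k - 1) * m"] gcd .
  then have "{C \<in> range (coker_class k g). ((`) (cyc_perm k) ^^ m) C = C}
      = coker_class k g ` fixed_modulo g k (gcd m k)"
    by auto
  also have "card \<dots> = card (lattice_coset (mat 1 - mpow g k) ` fixed_modulo g k (gcd m k))"
    by (rule card_image_eq_if_same_fibres(1))
       (simp add: coker_class_eq_iff assms(1) lattice_coset_eq_iff)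
  finally show ?thesis
    using card_fixed_modulo[OF _ assms(2)] by simp
qed

theorem c_k_mult_eq:
  assumes "0 < k" and "det (mat 1 - mpow g k) \<noteq> 0"
  shows "c_k k g * k = (\<Sum>d | d dvd k. totient (k div d) * nat \<bar>det (mat 1 - mpow g d)\<bar>)"
proof -
  let ?F = "(`) (cyc_perm k)" and ?X = "range (coker_class k g)"
  have "(?F ^^ k) C = C" if "C \<in> ?X" for C
  proof -
    obtain x where x: "C = coker_class k g x" using \<open>C \<in> ?X\<close> by blast
    have "mpow g ((k - 1) * k) *v x - x \<in> period_lattice g k"
      using fixed_modulo_mult[OF fixed_modulo_period, of x g k "k - 1"]
      by (simp add: fixed_modulo_def mult.commute)
    then show ?thesis by (simp add: x funpow_image_coker_class coker_class_eq_iff assms(1))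
  qed
  then have "card ((\<lambda>C. {(?F ^^ m) C | m. True}) ` ?X) * k = (\<Sum>m<k. card {C \<in> ?X. (?F ^^ m) C = C})"
    using finite_range_coker_class[OF assms] assms(1)
    by (intro card_orbits_cyclic_action) (auto simp: cyc_perm_image_coker_class)
  also have "\<dots> = (\<Sum>m<k. nat \<bar>det (mat 1 - mpow g (gcd m k))\<bar>)"
    by (simp add: card_fixed_coker_classes assms)
  also have "\<dots> = (\<Sum>d | d dvd k. totient (k div d) * nat \<bar>det (mat 1 - mpow g d)\<bar>)"
    using sum_gcd_eq_sum_totient[OF assms(1), of "\<lambda>d. nat \<bar>det (mat 1 - mpow g d)\<bar>"] by simp
  finally show ?thesis
    using coker_tors_eq[OF assms] quotient_coker_rel[OF assms(1)]
    by (simp add: c_k_def cyc_orbit_def image_funpow)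
qed

theorem lemma3p9:
  fixes \<gamma> :: "int^2^2" and k :: nat
  assumes "det \<gamma> = 1" and "k \<ge> 1"
    and "det (mat 1 - mpow \<gamma> k) \<noteq> 0"
  shows "real (c_k k \<gamma>) =
    (1 / real k) * (\<Sum>d \<in> {d. d dvd k}.
       real (totient (k div d)) * \<bar>real_of_int (trace (mpow \<gamma> d) - 2)\<bar>)"
proof -
  have "0 < k" using assms(2) by simp
  have "real (nat \<bar>det (mat 1 - mpow \<gamma> d)\<bar>) = \<bar>real_of_int (trace (mpow \<gamma> d) - 2)\<bar>" for d
    using assms(1) by (simp add: det_one_minus_2 det_mpow)
  then have "real (c_k k \<gamma>) * real k
      = (\<Sum>d | d dvd k. real (totient (k div d)) * \<bar>real_of_int (trace (mpow \<gamma> d) - 2)\<bar>)"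
    using arg_cong[OF c_k_mult_eq[OF \<open>0 < k\<close> assms(3)], of real] by simp
  then show ?thesis using \<open>0 < k\<close> by (simp add: field_simps)
qed

end
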